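(* Let $\rho>0$, let $f\colon\mathbb{R}^d\to\mathbb{R}$ be $C^1$ with $\rho$-Lipschitz gradient, let $r\colon\mathbb{R}^d\to\mathbb{R}\cup\{+\infty\}$ be a proper closed convex function, and $\varphi=f+r$. Suppose: (A1) one can generate i.i.d. realizations $\xi_0,\xi_1,\ldots\sim P$ from a probability space $(\Omega,\mathcal{F},P)$; (A2) there is an open set $U\supseteq\mathrm{dom}\,r$ and a measurable map $G\colon U\times\Omega\to\mathbb{R}^d$ with $\mathbb{E}_\xi[G(x,\xi)]=\nabla f(x)$ for all $x\in U$; ($\overline{\rm A3}$) there is $\sigma\ge0$ with $\mathbb{E}_\xi\|G(x,\xi)-\nabla f(x)\|^2\le\sigma^2$ for all $x\in\mathrm{dom}\,r$. Let $x_0\in\mathrm{dom}\,r$ and $x_{t+1}=\mathrm{prox}_{\alpha_t r}\big(x_t-\alpha_tG(x_t,\xi_t)\big)$ for $t\ge0$. Fix $\bar\rho>\rho$ and stepsizes $\alpha_t\in(0,1/\bar\rho]$, and let $\hat x_t=\operatorname{argmin}_y\{\varphi(y)+\frac{\bar\rho}{2}\|y-x_t\|^2\}$. Then for every $t\ge0$, $$\mathbb{E}_t\|x_{t+1}-\hat x_t\|^2\le\|x_t-\hat x_t\|^2+\alpha_t^2\sigma^2-\alpha_t(\bar\rho-\rho)\|x_t-\hat x_t\|^2.$$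
   Context: $\mathrm{prox}_{\alpha r}(x)=\operatorname{argmin}_y\{r(y)+\frac{1}{2\alpha}\|y-x\|^2\}$. $\mathbb{E}_t$ denotes expectation conditioned on $\xi_0,\ldots,\xi_{t-1}$. *)

theory Defs
  imports "HOL-Probability.Probability"
begin

definition edom :: "('a \<Rightarrow> ereal) \<Rightarrow> 'a set" where
  "edom r = {x. r x < \<infinity>}"

definition proper_fun :: "('a \<Rightarrow> ereal) \<Rightarrow> bool" where
  "proper_fun r \<longleftrightarrow> (\<forall>x. r x \<noteq> -\<infinity>) \<and> (\<exists>x. r x < \<infinity>)"

definition closed_fun :: "('a::topological_space \<Rightarrow> ereal) \<Rightarrow> bool" where
  "closed_fun r \<longleftrightarrow> closed {(x, y::real). r x \<le> ereal y}"

definition convex_fun :: "('a::real_vector \<Rightarrow> ereal) \<Rightarrow> bool" where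
  "convex_fun r \<longleftrightarrow> convex {(x, y::real). r x \<le> ereal y}"

definition argmin :: "('a \<Rightarrow> 'b::linorder) \<Rightarrow> 'a" where
  "argmin g = (THE y. \<forall>z. g y \<le> g z)"

definition prox :: "real \<Rightarrow> ('a::real_normed_vector \<Rightarrow> ereal) \<Rightarrow> 'a \<Rightarrow> 'a" where
  "prox \<alpha> r x = argmin (\<lambda>y. r y + ereal (norm (y - x) ^ 2 / (2 * \<alpha>)))"

end

theory Submission
  imports Defs
begin

(* Write x' = prox_{\<alpha> r}(x - \<alpha> G(x, \<xi>)) and let xh be the proximal point of \<phi> = f + r at x.
   Since f + (\<rho>b/2)|. - x|^2 is (\<rho>b - \<rho>)-strongly convex, xh exists, and its first-order
   condition says that xh is a fixed point of the deterministic step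
   y \<mapsto> prox_{\<alpha> r}(y - \<alpha> (\<nabla>f(y) + \<rho>b (y - x))).  As prox_{\<alpha> r} is nonexpansive,
     |x' - xh| \<le> |(1 - \<alpha> \<rho>b)(x - xh) - \<alpha> (\<nabla>f(x) - \<nabla>f(xh)) - \<alpha> e|,   e = G(x, \<xi>) - \<nabla>f(x).
   The deterministic part has norm at most (1 - \<alpha> (\<rho>b - \<rho>)) |x - xh| because \<nabla>f is
   \<rho>-Lipschitz, and e has mean zero and second moment at most \<sigma>^2, so the expected square is at
   most (1 - \<alpha> (\<rho>b - \<rho>)) |x - xh|^2 + \<alpha>^2 \<sigma>^2.  Conditionally on \<xi>_0, ..., \<xi>_{t-1} the
   iterate x_t is fixed and \<xi>_t is an independent sample of P, so the conditional expectation is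
   this expectation evaluated at x = x_t. *)

section \<open>Subgradients and minimisers of convex extended-real functions\<close>

definition subgradient :: "('a::real_inner \<Rightarrow> ereal) \<Rightarrow> 'a \<Rightarrow> 'a \<Rightarrow> bool" where
  "subgradient r x g \<longleftrightarrow>
    \<bar>r x\<bar> \<noteq> \<infinity> \<and> (\<forall>y. r x + ereal (g \<bullet> (y - x)) \<le> r y)"

lemma subgradient_monotone:
  assumes "subgradient r x g" and "subgradient r y h"
  shows "0 \<le> (g - h) \<bullet> (x - y)"
proof -
  obtain a b where a: "r x = ereal a" and b: "r y = ereal b"
    using assms by (cases "r x"; cases "r y") (auto simp: subgradient_def)
  have "ereal (a + g \<bullet> (y - x)) \<le> ereal b" "ereal (b + h \<bullet> (x - y)) \<le> ereal a"
    using assms a b unfolding subgradient_def by (metis plus_ereal.simps(1))+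
  then have "0 \<le> g \<bullet> (x - y) + h \<bullet> (y - x)"
    by (simp add: inner_diff_right)
  then show ?thesis by (simp add: inner_diff_left inner_diff_right)
qed

lemma power2_norm_diff_split:
  fixes x y u :: "'a::real_inner"
  shows "norm (y - x)^2 = norm (y - u)^2 + 2 * ((u - x) \<bullet> (y - u)) + norm (u - x)^2"
proof -
  have "norm (y - x)^2 = (y - u + (u - x)) \<bullet> (y - u + (u - x))"
    by (simp add: power2_norm_eq_inner)
  also have "\<dots> = norm (y - u)^2 + 2 * ((u - x) \<bullet> (y - u)) + norm (u - x)^2"
    by (simp only: inner_add_left inner_add_right inner_commute[of "y - u" "u - x"]
        power2_norm_eq_inner)
  finally show ?thesis .
qed

lemma proper_fun_ex_finite:
  assumes "proper_fun r"
  obtains x c where "r x = ereal c"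
proof -
  obtain x where "r x < \<infinity>" "r x \<noteq> -\<infinity>" using assms unfolding proper_fun_def by blast
  then show ?thesis using that by (cases "r x") auto
qed

lemma convex_funD:
  fixes r :: "'a::real_vector \<Rightarrow> ereal"
  assumes "convex_fun r" and "r x = ereal a" and "r y = ereal b" and "0 \<le> t" and "t \<le> 1"
  shows "r ((1 - t) *\<^sub>R x + t *\<^sub>R y) \<le> ereal ((1 - t) * a + t * b)"
proof -
  let ?E = "{(x, y::real). r x \<le> ereal y}"
  have "(x, a) \<in> ?E" "(y, b) \<in> ?E" using assms(2,3) by auto
  with assms(1,4,5) have "(1 - t) *\<^sub>R (x, a) + t *\<^sub>R (y, b) \<in> ?E"
    unfolding convex_fun_def convex_def by (meson diff_add_cancel diff_ge_0_iff_ge)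
  then show ?thesis by simp
qed

lemma convex_fun_affine_minorant:
  fixes r :: "'a::euclidean_space \<Rightarrow> ereal"
  assumes "proper_fun r" and "closed_fun r" and "convex_fun r"
  obtains a b where "\<And>x. ereal (a \<bullet> x + b) \<le> r x"
proof -
  let ?E = "{(x, y::real). r x \<le> ereal y}"
  obtain x1 c where c: "r x1 = ereal c" using proper_fun_ex_finite[OF assms(1)] .
  have "(x1, c - 1) \<notin> ?E" using c by auto
  from separating_hyperplane_closed_point[OF assms(3)[unfolded convex_fun_def]
      assms(2)[unfolded closed_fun_def] this]
  obtain a1 a2 b where sep: "(a1, a2) \<bullet> (x1, c - 1) < b" "\<forall>z\<in>?E. (a1, a2) \<bullet> z > b"
    by (metis surj_pair)
  have "(x1, c) \<in> ?E" using c by auto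
  with sep have "a1 \<bullet> x1 + a2 * (c - 1) < b" "b < a1 \<bullet> x1 + a2 * c" by auto
  then have a2: "a2 > 0" by (simp add: algebra_simps)
  have "ereal ((- a1 /\<^sub>R a2) \<bullet> x + b / a2) \<le> r x" for x
  proof (cases "r x")
    case (real v)
    with sep have "b < a1 \<bullet> x + a2 * v" by auto
    then show ?thesis using real a2 by (simp add: field_simps inner_commute)
  qed (use assms(1) in \<open>auto simp: proper_fun_def\<close>)
  then show ?thesis using that by blast
qed

text \<open>Compare the minimiser \<open>u\<close> with the points \<open>u + t (y - u)\<close> for small \<open>t > 0\<close>.\<close>
lemma subgradient_at_minimizer:
  fixes r :: "'a::real_inner \<Rightarrow> ereal" and s :: "'a \<Rightarrow> real"
  assumes proper: "proper_fun r" and convex: "convex_fun r"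
    and min: "\<And>z. r u + ereal (s u) \<le> r z + ereal (s z)"
    and upper: "\<And>z. s z \<le> s u + g \<bullet> (z - u) + L / 2 * norm (z - u)^2" and L: "0 \<le> L"
  shows "subgradient r u (- g)"
proof -
  obtain x1 c1 where "r x1 = ereal c1" using proper_fun_ex_finite[OF proper] .
  then have "r u \<noteq> \<infinity>" using min[of x1] by auto
  then obtain a where a: "r u = ereal a"
    using proper by (cases "r u") (auto simp: proper_fun_def)
  have variational: "a \<le> b + g \<bullet> (y - u)" if b: "r y = ereal b" for y b
  proof (rule ccontr)
    assume not_var: "\<not> ?thesis"
    define e where "e = a - b - g \<bullet> (y - u)"
    define K where "K = L * norm (y - u)^2"
    define t where "t = min 1 (e / (K + 1))"
    have e: "e > 0" and K: "K \<ge> 0" using not_var L by (auto simp: e_def K_def)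
    then have t: "0 < t" "t \<le> 1" by (auto simp: t_def)
    have "t * K \<le> e / (K + 1) * K" using K by (intro mult_right_mono) (auto simp: t_def)
    also have "\<dots> < e" using e K by (simp add: field_simps)
    finally have tK: "t * K < e" .
    define w where "w = (1 - t) *\<^sub>R u + t *\<^sub>R y"
    have wu: "w - u = t *\<^sub>R (y - u)" by (simp add: w_def algebra_simps)
    have "ereal (a + s u) \<le> r w + ereal (s w)" using min[of w] a by simp
    also have "\<dots> \<le> ereal ((1 - t) * a + t * b) + ereal (s w)"
      using convex_funD[OF convex a b, of t] t by (intro add_right_mono) (simp add: w_def)
    finally have "a + s u \<le> (1 - t) * a + t * b + s w" by simp
    moreover have "s w \<le> s u + t * (g \<bullet> (y - u)) + t * (t * K / 2)"
      using upper[of w] t unfolding wu by (simp add: K_def power2_eq_square mult_ac)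
    ultimately have "t * a \<le> t * (b + g \<bullet> (y - u) + t * K / 2)" by (simp add: algebra_simps)
    then have "a \<le> b + g \<bullet> (y - u) + t * K / 2" using t by simp
    with tK e show False by (simp add: e_def)
  qed
  show ?thesis
    unfolding subgradient_def
  proof (intro conjI allI)
    fix y show "r u + ereal (- g \<bullet> (y - u)) \<le> r y"
      using variational[of y] a proper by (cases "r y") (auto simp: proper_fun_def)
  qed (simp add: a)
qed

lemma subgradient_quadratic_growth:
  fixes r :: "'a::real_inner \<Rightarrow> ereal" and s :: "'a \<Rightarrow> real"
  assumes sub: "subgradient r u (- g)"
    and lower: "\<And>z. s u + g \<bullet> (z - u) + m / 2 * norm (z - u)^2 \<le> s z"
  shows "r u + ereal (s u) + ereal (m / 2 * norm (y - u)^2) \<le> r y + ereal (s y)"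
proof -
  obtain a where a: "r u = ereal a" using sub by (cases "r u") (auto simp: subgradient_def)
  have "ereal (a - g \<bullet> (y - u)) \<le> r y" using sub a unfolding subgradient_def by auto
  then show ?thesis using a lower[of y] by (cases "r y") auto
qed

lemma argmin_eqI:
  assumes "\<And>y. y \<noteq> u \<Longrightarrow> g u < g y"
  shows "argmin g = u"
  unfolding argmin_def
proof (rule the_equality)
  show "\<forall>z. g u \<le> g z" using assms by (metis order_less_imp_le order_refl)
  show "y = u" if "\<forall>z. g y \<le> g z" for y using that assms by (metis leD)
qed

lemma argmin_eq_subgradient:
  fixes r :: "'a::real_inner \<Rightarrow> ereal" and s :: "'a \<Rightarrow> real"
  assumes sub: "subgradient r u (- g)"
    and lower: "\<And>z. s u + g \<bullet> (z - u) + m / 2 * norm (z - u)^2 \<le> s z" and m: "0 < m"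
  shows "argmin (\<lambda>y. r y + ereal (s y)) = u"
proof (rule argmin_eqI)
  fix y assume "y \<noteq> u"
  obtain a where a: "r u = ereal a" using sub by (cases "r u") (auto simp: subgradient_def)
  have "r u + ereal (s u) < r u + ereal (s u) + ereal (m / 2 * norm (y - u)^2)"
    using \<open>y \<noteq> u\<close> m a by simp
  also have "\<dots> \<le> r y + ereal (s y)" by (rule subgradient_quadratic_growth[OF sub lower])
  finally show "r u + ereal (s u) < r y + ereal (s y)" .
qed

lemma quadratic_eventually_gt:
  fixes m k d C :: real
  assumes "0 < m"
  obtains R where "0 \<le> R" and "\<And>n. R < n \<Longrightarrow> C < d - k * n + m / 2 * n^2"
proof
  define R where "R = 1 + 2 * (\<bar>k\<bar> + \<bar>C - d\<bar>) / m"
  show "0 \<le> R" using assms by (simp add: R_def)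
  fix n assume n: "R < n"
  have R1: "1 \<le> R" using assms by (simp add: R_def)
  have "m / 2 * n * R < m / 2 * n^2" using n R1 assms by (simp add: power2_eq_square)
  moreover have "m / 2 * n * R = m / 2 * n + n * (\<bar>k\<bar> + \<bar>C - d\<bar>)"
    using assms by (simp add: R_def field_simps)
  moreover have "\<bar>C - d\<bar> \<le> n * \<bar>C - d\<bar>" "k * n \<le> n * \<bar>k\<bar>" "0 \<le> m / 2 * n"
    using n R1 assms mult_right_mono[of 1 n "\<bar>C - d\<bar>"] by (auto simp: mult.commute abs_if)
  ultimately show "C < d - k * n + m / 2 * n^2" by (simp add: algebra_simps)
qed

lemma bounded_epigraph_sublevel:
  fixes r :: "'a::euclidean_space \<Rightarrow> ereal" and s :: "'a \<Rightarrow> real"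
  assumes proper: "proper_fun r" and closed: "closed_fun r" and convex: "convex_fun r"
    and lower: "\<And>y. c0 + g0 \<bullet> (y - c) + m / 2 * norm (y - c)^2 \<le> s y" and m: "0 < m"
  shows "bounded {(y, v). r y \<le> ereal v \<and> v + s y \<le> C}"
proof -
  obtain a b where minorant: "\<And>x. ereal (a \<bullet> x + b) \<le> r x"
    using convex_fun_affine_minorant[OF proper closed convex] by blast
  define d where "d = a \<bullet> c + b + c0"
  have epi_lower: "d - norm (a + g0) * norm (y - c) + m / 2 * norm (y - c)^2 \<le> v + s y"
    if "r y \<le> ereal v" for y v
  proof -
    have "a \<bullet> c + a \<bullet> (y - c) + b \<le> v"
      using order_trans[OF minorant[of y] that] by (simp add: inner_diff_right)
    moreover have "- (norm (a + g0) * norm (y - c)) \<le> (a + g0) \<bullet> (y - c)"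
      using Cauchy_Schwarz_ineq2[of "a + g0" "y - c"] by linarith
    ultimately show ?thesis using lower[of y] by (simp add: d_def inner_add_left)
  qed
  obtain R where "0 \<le> R" and R: "\<And>n. R < n \<Longrightarrow> C < d - norm (a + g0) * n + m / 2 * n^2"
    using quadratic_eventually_gt[OF m] by blast
  have "{(y, v). r y \<le> ereal v \<and> v + s y \<le> C}
      \<subseteq> cball c R \<times> {- (norm a * (norm c + R)) + b .. C - c0 + norm g0 * R}"
  proof
    fix p assume "p \<in> {(y, v). r y \<le> ereal v \<and> v + s y \<le> C}"
    then obtain y v where p: "p = (y, v)" and epi: "r y \<le> ereal v" and below: "v + s y \<le> C"
      by (cases p) auto
    have yR: "norm (y - c) \<le> R"
    proof (rule ccontr)
      assume "\<not> norm (y - c) \<le> R"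
      then have "C < d - norm (a + g0) * norm (y - c) + m / 2 * norm (y - c)^2" by (intro R) simp
      with epi_lower[OF epi] below show False by linarith
    qed
    then have "norm y \<le> norm c + R" using norm_triangle_ineq2[of y c] by linarith
    then have "- (norm a * (norm c + R)) \<le> a \<bullet> y"
      using Cauchy_Schwarz_ineq2[of a y] mult_left_mono[of "norm y" "norm c + R" "norm a"] by auto
    moreover have "a \<bullet> y + b \<le> v" using order_trans[OF minorant[of y] epi] by simp
    ultimately have v_lower: "- (norm a * (norm c + R)) + b \<le> v" by linarith
    have "norm g0 * norm (y - c) \<le> norm g0 * R" using yR by (simp add: mult_left_mono)
    then have "- (norm g0 * R) \<le> g0 \<bullet> (y - c)"
      using Cauchy_Schwarz_ineq2[of g0 "y - c"] by linarith
    moreover have "0 \<le> m / 2 * norm (y - c)^2" using m by simp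
    ultimately have "c0 - norm g0 * R \<le> s y" using lower[of y] by linarith
    with yR v_lower below p
    show "p \<in> cball c R \<times> {- (norm a * (norm c + R)) + b .. C - c0 + norm g0 * R}"
      by (simp add: dist_norm norm_minus_commute)
  qed
  then show ?thesis
    by (rule bounded_subset[OF compact_imp_bounded[OF compact_Times[OF compact_cball compact_Icc]]])
qed

lemma closed_epigraph_sublevel:
  fixes r :: "'a::topological_space \<Rightarrow> ereal" and s :: "'a \<Rightarrow> real"
  assumes "closed_fun r" and "continuous_on UNIV s"
  shows "closed {(y, v). r y \<le> ereal v \<and> v + s y \<le> C}"
proof -
  have "continuous_on UNIV (\<lambda>p::'a \<times> real. snd p + s (fst p))"
    by (intro continuous_intros continuous_on_compose2[OF assms(2)]) auto
  then have "closed {p. snd p + s (fst p) \<le> C}"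
    using closed_Collect_le[OF _ continuous_on_const] by blast
  moreover have "{(y, v). r y \<le> ereal v \<and> v + s y \<le> C}
      = {(y, v::real). r y \<le> ereal v} \<inter> {p. snd p + s (fst p) \<le> C}"
    by auto
  ultimately show ?thesis using assms(1) unfolding closed_fun_def by (simp add: closed_Int)
qed

lemma ex_minimizer_quadratic_growth:
  fixes r :: "'a::euclidean_space \<Rightarrow> ereal" and s :: "'a \<Rightarrow> real"
  assumes proper: "proper_fun r" and closed: "closed_fun r" and convex: "convex_fun r"
    and cont: "continuous_on UNIV s"
    and lower: "\<And>y. c0 + g0 \<bullet> (y - c) + m / 2 * norm (y - c)^2 \<le> s y" and m: "0 < m"
  obtains u where "\<And>y. r u + ereal (s u) \<le> r y + ereal (s y)"
proof -
  obtain x1 c1 where c1: "r x1 = ereal c1" using proper_fun_ex_finite[OF proper] .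
  define S where "S = {(y, v). r y \<le> ereal v \<and> v + s y \<le> c1 + s x1}"
  have "compact S"
    unfolding S_def compact_eq_bounded_closed
    using bounded_epigraph_sublevel[OF proper closed convex lower m]
      closed_epigraph_sublevel[OF closed cont] by blast
  moreover have "(x1, c1) \<in> S" using c1 by (simp add: S_def)
  moreover have "continuous_on S (\<lambda>p. snd p + s (fst p))"
    by (intro continuous_intros continuous_on_compose2[OF cont]) auto
  ultimately obtain p where "p \<in> S" and "\<forall>q\<in>S. snd p + s (fst p) \<le> snd q + s (fst q)"
    using continuous_attains_inf[of S "\<lambda>p. snd p + s (fst p)"] by blast
  then obtain u v where uv: "(u, v) \<in> S"
    and uv_min: "\<And>q. q \<in> S \<Longrightarrow> v + s u \<le> snd q + s (fst q)"
    by (cases p) auto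
  have "r u + ereal (s u) \<le> r y + ereal (s y)" for y
  proof (cases "r y")
    case (real w)
    have "v + s u \<le> w + s y"
    proof (cases "(y, w) \<in> S")
      case True
      from uv_min[OF this] show ?thesis by simp
    qed (use uv real in \<open>simp add: S_def\<close>)
    have "r u + ereal (s u) \<le> ereal v + ereal (s u)"
      using uv by (intro add_right_mono) (simp add: S_def)
    also have "\<dots> \<le> r y + ereal (s y)" using \<open>v + s u \<le> w + s y\<close> real by simp
    finally show ?thesis .
  qed (use proper in \<open>auto simp: proper_fun_def\<close>)
  then show ?thesis using that by blast
qed

section \<open>The proximal map\<close>

lemma norm_le_of_sq_le_inner:
  fixes u z :: "'a::real_inner"
  assumes "c * norm u ^ 2 \<le> z \<bullet> u" and "0 < c"
  shows "c * norm u \<le> norm z"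
proof (cases "u = 0")
  case False
  have "c * norm u * norm u \<le> norm z * norm u"
    using assms(1) norm_cauchy_schwarz[of z u] by (simp add: power2_eq_square)
  then show ?thesis using False by simp
qed simp

lemma inner_divide_scaleR_left: "(x /\<^sub>R c) \<bullet> y = (x \<bullet> y) / c"
  by (simp add: inner_scaleR_left divide_inverse_commute)

lemma prox_eqI:
  fixes r :: "'a::real_inner \<Rightarrow> ereal"
  assumes "0 < \<alpha>" and "subgradient r u ((z - u) /\<^sub>R \<alpha>)"
  shows "prox \<alpha> r z = u"
proof -
  have lower: "norm (u - z)^2 / (2 * \<alpha>) + ((u - z) /\<^sub>R \<alpha>) \<bullet> (y - u) + (1 / \<alpha>) / 2 * norm (y - u)^2
      \<le> norm (y - z)^2 / (2 * \<alpha>)" for y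
    using power2_norm_diff_split[of y z u] assms(1) unfolding inner_divide_scaleR_left
    by (simp add: field_simps)
  have "subgradient r u (- ((u - z) /\<^sub>R \<alpha>))"
    using assms(2) by (simp add: scaleR_right_diff_distrib)
  then show ?thesis
    unfolding prox_def by (rule argmin_eq_subgradient[OF _ lower]) (use assms(1) in simp)
qed

lemma subgradient_prox:
  fixes r :: "'a::euclidean_space \<Rightarrow> ereal"
  assumes "0 < \<alpha>" and proper: "proper_fun r" and closed: "closed_fun r" and convex: "convex_fun r"
  shows "subgradient r (prox \<alpha> r z) ((z - prox \<alpha> r z) /\<^sub>R \<alpha>)"
proof -
  define s where "s y = norm (y - z)^2 / (2 * \<alpha>)" for y
  have expand: "s y = s u + ((u - z) /\<^sub>R \<alpha>) \<bullet> (y - u) + (1 / \<alpha>) / 2 * norm (y - u)^2" for y u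
    using power2_norm_diff_split[of y z u] assms(1) unfolding inner_divide_scaleR_left s_def
    by (simp add: field_simps)
  have "continuous_on UNIV s" unfolding s_def by (intro continuous_intros) (use assms(1) in auto)
  then obtain u where min: "\<And>y. r u + ereal (s u) \<le> r y + ereal (s y)"
    using ex_minimizer_quadratic_growth[OF proper closed convex, of s 0 0 z "1 / \<alpha>"] expand[of _ z]
      assms(1) by (auto simp: s_def)
  have "subgradient r u (- ((u - z) /\<^sub>R \<alpha>))"
    using subgradient_at_minimizer[OF proper convex min, of _ "1 / \<alpha>"] expand assms(1) by simp
  then have sub: "subgradient r u ((z - u) /\<^sub>R \<alpha>)" by (simp add: scaleR_right_diff_distrib)
  with prox_eqI[OF assms(1) sub] show ?thesis by simp
qed

lemma prox_in_edom:
  fixes r :: "'a::euclidean_space \<Rightarrow> ereal"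
  assumes "0 < \<alpha>" and "proper_fun r" and "closed_fun r" and "convex_fun r"
  shows "prox \<alpha> r z \<in> edom r"
  using subgradient_prox[OF assms, of z] by (auto simp: subgradient_def edom_def)

lemma prox_nonexpansive:
  fixes r :: "'a::euclidean_space \<Rightarrow> ereal"
  assumes "0 < \<alpha>" and "proper_fun r" and "closed_fun r" and "convex_fun r"
  shows "norm (prox \<alpha> r z1 - prox \<alpha> r z2) \<le> norm (z1 - z2)"
proof -
  define u1 u2 where "u1 = prox \<alpha> r z1" and "u2 = prox \<alpha> r z2"
  have "0 \<le> ((z1 - u1) /\<^sub>R \<alpha> - (z2 - u2) /\<^sub>R \<alpha>) \<bullet> (u1 - u2)"
    unfolding u1_def u2_def by (intro subgradient_monotone[of r] subgradient_prox assms)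
  also have "(z1 - u1) /\<^sub>R \<alpha> - (z2 - u2) /\<^sub>R \<alpha> = ((z1 - z2) - (u1 - u2)) /\<^sub>R \<alpha>"
    by (simp add: algebra_simps)
  also have "(((z1 - z2) - (u1 - u2)) /\<^sub>R \<alpha>) \<bullet> (u1 - u2)
      = ((z1 - z2) \<bullet> (u1 - u2) - norm (u1 - u2)^2) / \<alpha>"
    unfolding inner_divide_scaleR_left by (simp add: inner_diff_left power2_norm_eq_inner)
  finally have "1 * norm (u1 - u2)^2 \<le> (z1 - z2) \<bullet> (u1 - u2)"
    using assms(1) by (simp add: zero_le_divide_iff)
  from norm_le_of_sq_le_inner[OF this] show ?thesis by (simp add: u1_def u2_def)
qed

lemma continuous_on_prox:
  fixes r :: "'a::euclidean_space \<Rightarrow> ereal"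
  assumes "0 < \<alpha>" and "proper_fun r" and "closed_fun r" and "convex_fun r"
  shows "continuous_on UNIV (prox \<alpha> r)"
  by (rule lipschitz_on_continuous_on[where L=1], rule lipschitz_onI)
     (use prox_nonexpansive[OF assms] in \<open>auto simp: dist_norm\<close>)

section \<open>Functions with Lipschitz gradient\<close>

lemma tangent_le_of_monotone_gradient:
  fixes h :: "'a::real_inner \<Rightarrow> real"
  assumes deriv: "\<And>x. (h has_derivative (\<lambda>v. gh x \<bullet> v)) (at x)"
    and mono: "\<And>x y. 0 \<le> (gh x - gh y) \<bullet> (x - y)"
  shows "h a + gh a \<bullet> (b - a) \<le> h b"
proof -
  define \<psi> where "\<psi> t = h (a + t *\<^sub>R (b - a))" for t
  define \<psi>' where "\<psi>' t = gh (a + t *\<^sub>R (b - a)) \<bullet> (b - a)" for t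
  have der: "(\<psi> has_real_derivative \<psi>' t) (at t)" for t
  proof -
    have "((\<lambda>t. a + t *\<^sub>R (b - a)) has_derivative (\<lambda>t'. t' *\<^sub>R (b - a))) (at t)"
      by (auto intro!: derivative_eq_intros)
    from has_derivative_compose[OF this deriv] show ?thesis
      unfolding has_field_derivative_def \<psi>_def \<psi>'_def
      by (rule has_derivative_eq_rhs) (auto simp: fun_eq_iff)
  qed
  have "convex_on UNIV \<psi>"
  proof (rule convex_on_realI[OF _ der])
    fix s t :: real assume "s \<le> t"
    have "0 \<le> (gh (a + t *\<^sub>R (b - a)) - gh (a + s *\<^sub>R (b - a))) \<bullet> ((t - s) *\<^sub>R (b - a))"
      using mono[of "a + t *\<^sub>R (b - a)" "a + s *\<^sub>R (b - a)"] by (simp add: algebra_simps)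
    then have "0 \<le> (t - s) * (\<psi>' t - \<psi>' s)" by (simp add: \<psi>'_def inner_diff_left)
    then show "\<psi>' s \<le> \<psi>' t" using \<open>s \<le> t\<close> by (cases "s = t") (auto simp: zero_le_mult_iff)
  qed simp
  from convex_on_imp_above_tangent[OF this, of 0 1 "\<psi>' 0"] der[of 0]
  have "\<psi>' 0 \<le> \<psi> 1 - \<psi> 0" by (simp add: has_field_derivative_at_within)
  then show ?thesis by (simp add: \<psi>_def \<psi>'_def)
qed

text \<open>Adding \<open>c/2 \<parallel>x\<parallel>\<^sup>2\<close> makes the gradient monotone.\<close>
lemma tangent_le_of_hypomonotone_gradient:
  fixes h :: "'a::real_inner \<Rightarrow> real"
  assumes deriv: "\<And>x. (h has_derivative (\<lambda>v. gh x \<bullet> v)) (at x)"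
    and hypo: "\<And>x y. - (c * norm (x - y)^2) \<le> (gh x - gh y) \<bullet> (x - y)"
  shows "h a + gh a \<bullet> (b - a) - c / 2 * norm (b - a)^2 \<le> h b"
proof -
  have sq_deriv: "((\<lambda>x. c / 2 * norm x ^ 2) has_derivative (\<lambda>v. (c *\<^sub>R x) \<bullet> v)) (at x)" for x
  proof -
    have "((\<lambda>x. c / 2 * (x \<bullet> x)) has_derivative (\<lambda>v. c / 2 * (v \<bullet> x + x \<bullet> v))) (at x)"
      by (auto intro!: derivative_eq_intros)
    then show ?thesis
      by (simp add: power2_norm_eq_inner inner_commute algebra_simps)
  qed
  have "(h a + c / 2 * norm a ^ 2) + (gh a + c *\<^sub>R a) \<bullet> (b - a) \<le> h b + c / 2 * norm b ^ 2"
  proof (rule tangent_le_of_monotone_gradient[where h = "\<lambda>x. h x + c / 2 * norm x ^ 2"])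
    show "((\<lambda>x. h x + c / 2 * norm x ^ 2) has_derivative (\<lambda>v. (gh x + c *\<^sub>R x) \<bullet> v)) (at x)" for x
      using has_derivative_add[OF deriv sq_deriv] by (simp add: inner_add_left)
    show "0 \<le> (gh x + c *\<^sub>R x - (gh y + c *\<^sub>R y)) \<bullet> (x - y)" for x y
      using hypo[of x y]
      by (simp add: algebra_simps inner_diff_left inner_diff_right power2_norm_eq_inner)
  qed
  moreover have "norm b ^ 2 = norm a ^ 2 + 2 * (a \<bullet> (b - a)) + norm (b - a)^2"
    using power2_norm_diff_split[of b 0 a] by simp
  ultimately show ?thesis by (simp add: inner_add_left algebra_simps)
qed

lemma lipschitz_gradient_quadratic_bounds:
  fixes f :: "'a::real_inner \<Rightarrow> real"
  assumes deriv: "\<And>x. (f has_derivative (\<lambda>h. gf x \<bullet> h)) (at x)"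
    and lip: "\<And>x y. norm (gf x - gf y) \<le> \<rho> * norm (x - y)"
  shows "f a + gf a \<bullet> (b - a) - \<rho> / 2 * norm (b - a)^2 \<le> f b"
    and "f b \<le> f a + gf a \<bullet> (b - a) + \<rho> / 2 * norm (b - a)^2"
proof -
  have cs: "\<bar>(gf x - gf y) \<bullet> (x - y)\<bar> \<le> \<rho> * norm (x - y)^2" for x y
    using Cauchy_Schwarz_ineq2[of "gf x - gf y" "x - y"] mult_right_mono[OF lip[of x y], of "norm (x - y)"]
    by (simp add: power2_eq_square)
  show "f a + gf a \<bullet> (b - a) - \<rho> / 2 * norm (b - a)^2 \<le> f b"
  proof (rule tangent_le_of_hypomonotone_gradient[OF deriv])
    show "- (\<rho> * norm (x - y)^2) \<le> (gf x - gf y) \<bullet> (x - y)" for x y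
      using cs[of x y] by (simp add: abs_le_iff)
  qed
  have "- f a + (- gf a) \<bullet> (b - a) - \<rho> / 2 * norm (b - a)^2 \<le> - f b"
  proof (rule tangent_le_of_hypomonotone_gradient)
    show "((\<lambda>x. - f x) has_derivative (\<lambda>v. (- gf x) \<bullet> v)) (at x)" for x
      using has_derivative_minus[OF deriv] by simp
    show "- (\<rho> * norm (x - y)^2) \<le> (- gf x - - gf y) \<bullet> (x - y)" for x y
      using cs[of x y] by (simp add: abs_le_iff inner_diff_left)
  qed
  then show "f b \<le> f a + gf a \<bullet> (b - a) + \<rho> / 2 * norm (b - a)^2" by simp
qed

section \<open>One step of the stochastic proximal gradient method\<close>

lemma (in prob_space) nn_integral_norm_sq_centered_le:
  fixes e :: "'a \<Rightarrow> 'b::euclidean_space"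
  assumes int: "integrable M e" and mean: "(\<integral>w. e w \<partial>M) = 0"
    and var: "(\<integral>\<^sup>+ w. ennreal (norm (e w)^2) \<partial>M) \<le> ennreal (\<sigma>^2)"
  shows "(\<integral>\<^sup>+ w. ennreal (norm (v - c *\<^sub>R e w)^2) \<partial>M) \<le> ennreal (norm v^2 + c^2 * \<sigma>^2)"
proof -
  have sq_int: "integrable M (\<lambda>w. norm (e w)^2)"
  proof (rule integrableI_bounded)
    show "(\<lambda>w. norm (e w)^2) \<in> borel_measurable M"
      using borel_measurable_integrable[OF int] by measurable
    show "(\<integral>\<^sup>+ w. ennreal (norm (norm (e w)^2)) \<partial>M) < \<infinity>"
      using var by (simp add: le_less_trans)
  qed
  have "ennreal (\<integral>w. norm (e w)^2 \<partial>M) = (\<integral>\<^sup>+ w. ennreal (norm (e w)^2) \<partial>M)"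
    by (rule nn_integral_eq_integral[OF sq_int, symmetric]) auto
  with var have "ennreal (\<integral>w. norm (e w)^2 \<partial>M) \<le> ennreal (\<sigma>^2)" by simp
  then have sq_le: "(\<integral>w. norm (e w)^2 \<partial>M) \<le> \<sigma>^2" by (simp add: ennreal_le_iff)
  have expand: "norm (v - c *\<^sub>R e w)^2 = norm v^2 - 2 * c * (v \<bullet> e w) + c^2 * norm (e w)^2" for w
    unfolding power2_norm_eq_inner
    by (simp add: inner_diff_left inner_diff_right inner_commute algebra_simps power2_eq_square)
  have "integrable M (\<lambda>w. norm (v - c *\<^sub>R e w)^2)" unfolding expand using int sq_int by simp
  then have "(\<integral>\<^sup>+ w. ennreal (norm (v - c *\<^sub>R e w)^2) \<partial>M)
      = ennreal (\<integral>w. norm (v - c *\<^sub>R e w)^2 \<partial>M)"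
    by (rule nn_integral_eq_integral) simp
  also have "(\<integral>w. norm (v - c *\<^sub>R e w)^2 \<partial>M) = norm v^2 + c^2 * (\<integral>w. norm (e w)^2 \<partial>M)"
    unfolding expand using int sq_int mean by (simp add: prob_space)
  also have "\<dots> \<le> norm v^2 + c^2 * \<sigma>^2" using sq_le by (simp add: mult_left_mono)
  finally show ?thesis by (simp add: ennreal_leI)
qed

locale weakly_convex_composite =
  fixes f :: "'a::euclidean_space \<Rightarrow> real" and gf :: "'a \<Rightarrow> 'a" and \<rho> \<rho>b :: real
    and r :: "'a \<Rightarrow> ereal"
  assumes f_grad: "\<And>x. (f has_derivative (\<lambda>h. gf x \<bullet> h)) (at x)"
    and gf_lip: "\<And>x y. norm (gf x - gf y) \<le> \<rho> * norm (x - y)"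
    and rho_nonneg: "0 \<le> \<rho>" and rho_less: "\<rho> < \<rho>b"
    and r_proper: "proper_fun r" and r_closed: "closed_fun r" and r_convex: "convex_fun r"
begin

definition prox_point :: "'a \<Rightarrow> 'a" where
  "prox_point x = argmin (\<lambda>y. ereal (f y) + r y + ereal (\<rho>b / 2 * norm (y - x) ^ 2))"

lemma penalized_quadratic_bounds:
  fixes x u z :: 'a
  defines "s \<equiv> \<lambda>y. f y + \<rho>b / 2 * norm (y - x) ^ 2"
  shows "s u + (gf u + \<rho>b *\<^sub>R (u - x)) \<bullet> (z - u) + (\<rho>b - \<rho>) / 2 * norm (z - u)^2 \<le> s z"
    and "s z \<le> s u + (gf u + \<rho>b *\<^sub>R (u - x)) \<bullet> (z - u) + (\<rho> + \<rho>b) / 2 * norm (z - u)^2"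
proof -
  have "\<rho>b / 2 * norm (z - x)^2
      = \<rho>b / 2 * norm (z - u)^2 + \<rho>b * ((u - x) \<bullet> (z - u)) + \<rho>b / 2 * norm (u - x)^2"
    by (subst power2_norm_diff_split[of z x u]) (simp add: ring_distribs)
  then show "s u + (gf u + \<rho>b *\<^sub>R (u - x)) \<bullet> (z - u) + (\<rho>b - \<rho>) / 2 * norm (z - u)^2 \<le> s z"
    and "s z \<le> s u + (gf u + \<rho>b *\<^sub>R (u - x)) \<bullet> (z - u) + (\<rho> + \<rho>b) / 2 * norm (z - u)^2"
    using lipschitz_gradient_quadratic_bounds[OF f_grad gf_lip, where a=u and b=z]
    by (simp_all add: s_def inner_add_left algebra_simps diff_divide_distrib add_divide_distrib)
qed

lemma subgradient_prox_point:
  "subgradient r (prox_point x) (- (gf (prox_point x) + \<rho>b *\<^sub>R (prox_point x - x)))"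
proof -
  define s where "s y = f y + \<rho>b / 2 * norm (y - x) ^ 2" for y
  have lower: "s u + (gf u + \<rho>b *\<^sub>R (u - x)) \<bullet> (z - u) + (\<rho>b - \<rho>) / 2 * norm (z - u)^2 \<le> s z"
    and upper: "s z \<le> s u + (gf u + \<rho>b *\<^sub>R (u - x)) \<bullet> (z - u) + (\<rho> + \<rho>b) / 2 * norm (z - u)^2"
    for u z unfolding s_def by (rule penalized_quadratic_bounds)+
  have objective: "(\<lambda>y. ereal (f y) + r y + ereal (\<rho>b / 2 * norm (y - x) ^ 2))
      = (\<lambda>y. r y + ereal (s y))"
  proof -
    have "ereal a + c + ereal b = c + ereal (a + b)" for a b and c :: ereal by (cases c) auto
    then show ?thesis by (simp add: s_def)
  qed
  have "continuous_on UNIV f"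
    using has_derivative_continuous[OF f_grad] by (simp add: continuous_at_imp_continuous_on)
  then have "continuous_on UNIV s" unfolding s_def by (intro continuous_intros)
  then obtain u where min: "\<And>y. r u + ereal (s u) \<le> r y + ereal (s y)"
    by (rule ex_minimizer_quadratic_growth[OF r_proper r_closed r_convex _ lower[of x]])
       (use rho_less in auto)
  have sub: "subgradient r u (- (gf u + \<rho>b *\<^sub>R (u - x)))"
    by (rule subgradient_at_minimizer[OF r_proper r_convex min upper])
       (use rho_nonneg rho_less in simp)
  have "prox_point x = u"
    unfolding prox_point_def objective
    by (rule argmin_eq_subgradient[OF sub lower]) (use rho_less in simp)
  with sub show ?thesis by simp
qed

lemma prox_point_fixed_point:
  assumes "0 < \<alpha>"
  shows "prox \<alpha> r (prox_point x - \<alpha> *\<^sub>R (gf (prox_point x) + \<rho>b *\<^sub>R (prox_point x - x)))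
    = prox_point x"
  by (rule prox_eqI[OF assms]) (use subgradient_prox_point[of x] assms in simp)

lemma prox_point_lipschitz:
  "(\<rho>b - \<rho>) * norm (prox_point x1 - prox_point x2) \<le> \<rho>b * norm (x1 - x2)"
proof -
  define u1 u2 where "u1 = prox_point x1" and "u2 = prox_point x2"
  have "0 \<le> (- (gf u1 + \<rho>b *\<^sub>R (u1 - x1)) - - (gf u2 + \<rho>b *\<^sub>R (u2 - x2))) \<bullet> (u1 - u2)"
    unfolding u1_def u2_def by (intro subgradient_monotone[of r] subgradient_prox_point)
  then have "(gf u1 - gf u2) \<bullet> (u1 - u2) + \<rho>b * norm (u1 - u2)^2
      \<le> (\<rho>b *\<^sub>R (x1 - x2)) \<bullet> (u1 - u2)"
    by (simp add: algebra_simps inner_diff_left inner_diff_right power2_norm_eq_inner)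
  moreover have "- (\<rho> * norm (u1 - u2)^2) \<le> (gf u1 - gf u2) \<bullet> (u1 - u2)"
    using Cauchy_Schwarz_ineq2[of "gf u1 - gf u2" "u1 - u2"]
      mult_right_mono[OF gf_lip[of u1 u2], of "norm (u1 - u2)"]
    by (simp add: power2_eq_square)
  ultimately have "(\<rho>b - \<rho>) * norm (u1 - u2)^2 \<le> (\<rho>b *\<^sub>R (x1 - x2)) \<bullet> (u1 - u2)"
    by (simp add: algebra_simps)
  from norm_le_of_sq_le_inner[OF this] rho_nonneg rho_less show ?thesis
    by (simp add: u1_def u2_def)
qed

lemma continuous_on_prox_point: "continuous_on UNIV prox_point"
proof (rule lipschitz_on_continuous_on[where L = "\<rho>b / (\<rho>b - \<rho>)"], rule lipschitz_onI)
  show "dist (prox_point x1) (prox_point x2) \<le> \<rho>b / (\<rho>b - \<rho>) * dist x1 x2" for x1 x2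
    using prox_point_lipschitz[of x1 x2] rho_less by (simp add: dist_norm field_simps)
qed (use rho_nonneg rho_less in simp)

lemma gradient_step_contraction:
  assumes "0 \<le> \<alpha>" and "\<alpha> * \<rho>b \<le> 1"
  shows "norm ((1 - \<alpha> * \<rho>b) *\<^sub>R (x - u) - \<alpha> *\<^sub>R (gf x - gf u))
    \<le> (1 - \<alpha> * (\<rho>b - \<rho>)) * norm (x - u)"
proof -
  have "norm ((1 - \<alpha> * \<rho>b) *\<^sub>R (x - u) - \<alpha> *\<^sub>R (gf x - gf u))
      \<le> (1 - \<alpha> * \<rho>b) * norm (x - u) + \<alpha> * norm (gf x - gf u)"
    using norm_triangle_ineq4[of "(1 - \<alpha> * \<rho>b) *\<^sub>R (x - u)" "\<alpha> *\<^sub>R (gf x - gf u)"] assms by simp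
  also have "\<dots> \<le> (1 - \<alpha> * \<rho>b) * norm (x - u) + \<alpha> * (\<rho> * norm (x - u))"
    using gf_lip[of x u] assms(1) by (simp add: mult_left_mono)
  finally show ?thesis by (simp add: algebra_simps)
qed

lemma expected_prox_gradient_step:
  fixes P :: "'w measure" and G :: "'a \<Rightarrow> 'w \<Rightarrow> 'a"
  assumes "prob_space P" and "integrable P (G x)" and "(\<integral>w. G x w \<partial>P) = gf x"
    and "(\<integral>\<^sup>+ w. ennreal (norm (G x w - gf x)^2) \<partial>P) \<le> ennreal (\<sigma>^2)"
    and \<alpha>: "0 < \<alpha>" "\<alpha> \<le> 1 / \<rho>b"
  shows "(\<integral>\<^sup>+ w. ennreal (norm (prox \<alpha> r (x - \<alpha> *\<^sub>R G x w) - prox_point x)^2) \<partial>P)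
    \<le> ennreal (norm (x - prox_point x)^2 + \<alpha>^2 * \<sigma>^2
                - \<alpha> * (\<rho>b - \<rho>) * norm (x - prox_point x)^2)"
proof -
  interpret prob_space P by fact
  define u where "u = prox_point x"
  define v where "v = (1 - \<alpha> * \<rho>b) *\<^sub>R (x - u) - \<alpha> *\<^sub>R (gf x - gf u)"
  define c where "c = \<alpha> * (\<rho>b - \<rho>)"
  have \<alpha>\<rho>b: "\<alpha> * \<rho>b \<le> 1" using \<alpha> rho_nonneg rho_less by (simp add: field_simps)
  moreover have "0 \<le> \<alpha> * \<rho>" using \<alpha> rho_nonneg by simp
  ultimately have c: "0 \<le> c" "c \<le> 1"
    using \<alpha> rho_less by (auto simp: c_def algebra_simps)
  have pointwise: "norm (prox \<alpha> r (x - \<alpha> *\<^sub>R G x w) - u) \<le> norm (v - \<alpha> *\<^sub>R (G x w - gf x))" for w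
  proof -
    have "norm (prox \<alpha> r (x - \<alpha> *\<^sub>R G x w) - u)
        \<le> norm ((x - \<alpha> *\<^sub>R G x w) - (u - \<alpha> *\<^sub>R (gf u + \<rho>b *\<^sub>R (u - x))))"
      using prox_nonexpansive[OF \<alpha>(1) r_proper r_closed r_convex]
        prox_point_fixed_point[OF \<alpha>(1), of x] by (metis u_def)
    then show ?thesis by (simp add: v_def algebra_simps)
  qed
  have "(\<integral>\<^sup>+ w. ennreal (norm (prox \<alpha> r (x - \<alpha> *\<^sub>R G x w) - u)^2) \<partial>P)
      \<le> (\<integral>\<^sup>+ w. ennreal (norm (v - \<alpha> *\<^sub>R (G x w - gf x))^2) \<partial>P)"
    using pointwise by (intro nn_integral_mono ennreal_leI power_mono) auto
  also have "\<dots> \<le> ennreal (norm v^2 + \<alpha>^2 * \<sigma>^2)"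
    using assms(2-4) by (intro nn_integral_norm_sq_centered_le) (auto simp: prob_space)
  also have "\<dots> \<le> ennreal ((1 - c) * norm (x - u)^2 + \<alpha>^2 * \<sigma>^2)"
  proof (intro ennreal_leI add_right_mono)
    have "norm v^2 \<le> ((1 - c) * norm (x - u))^2"
      using gradient_step_contraction[of \<alpha> x u] \<alpha> \<alpha>\<rho>b by (intro power_mono) (auto simp: v_def c_def)
    also have "\<dots> = (1 - c) * (1 - c) * norm (x - u)^2" by (simp add: power_mult_distrib power2_eq_square)
    also have "\<dots> \<le> (1 - c) * norm (x - u)^2"
      using c by (intro mult_right_mono mult_left_le_one_le) auto
    finally show "norm v^2 \<le> (1 - c) * norm (x - u)^2" .
  qed
  finally show ?thesis by (simp add: u_def c_def algebra_simps)
qed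

end

section \<open>Conditional expectations along iterated random maps\<close>

lemma (in prob_space) nn_integral_indep_var:
  assumes indep: "indep_var S Y N Z" and K: "K \<in> borel_measurable (S \<Otimes>\<^sub>M N)"
  shows "(\<integral>\<^sup>+ \<omega>. K (Y \<omega>, Z \<omega>) \<partial>M)
    = (\<integral>\<^sup>+ \<omega>. (\<integral>\<^sup>+ z. K (Y \<omega>, z) \<partial>distr M N Z) \<partial>M)"
proof -
  have Y: "Y \<in> measurable M S" and Z: "Z \<in> measurable M N"
    using indep by (auto dest: indep_var_rv1 indep_var_rv2)
  interpret Zd: prob_space "distr M N Z" by (rule prob_space_distr[OF Z])
  have K': "K \<in> borel_measurable (S \<Otimes>\<^sub>M distr M N Z)" using K by (simp cong: measurable_cong_sets)
  have "(\<integral>\<^sup>+ \<omega>. K (Y \<omega>, Z \<omega>) \<partial>M)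
      = (\<integral>\<^sup>+ p. K p \<partial>distr M (S \<Otimes>\<^sub>M N) (\<lambda>\<omega>. (Y \<omega>, Z \<omega>)))"
    using K by (simp add: nn_integral_distr[OF measurable_Pair[OF Y Z]])
  also have "\<dots> = (\<integral>\<^sup>+ p. K p \<partial>(distr M S Y \<Otimes>\<^sub>M distr M N Z))"
    using indep by (simp add: indep_var_distribution_eq)
  also have "\<dots> = (\<integral>\<^sup>+ y. \<integral>\<^sup>+ z. K (y, z) \<partial>distr M N Z \<partial>distr M S Y)"
    by (rule Zd.nn_integral_fst[symmetric]) (use K in \<open>simp cong: measurable_cong_sets\<close>)
  also have "\<dots> = (\<integral>\<^sup>+ \<omega>. (\<integral>\<^sup>+ z. K (Y \<omega>, z) \<partial>distr M N Z) \<partial>M)"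
    using Zd.borel_measurable_nn_integral_fst[OF K'] by (simp add: nn_integral_distr[OF Y])
  finally show ?thesis .
qed

lemma (in prob_space) nn_cond_exp_freezing:
  assumes indep: "indep_var S Y N Z" and K: "K \<in> borel_measurable (S \<Otimes>\<^sub>M N)"
  shows "AE \<omega> in M. nn_cond_exp M (vimage_algebra (space M) Y S) (\<lambda>\<omega>. K (Y \<omega>, Z \<omega>)) \<omega>
    = (\<integral>\<^sup>+ \<omega>'. K (Y \<omega>, Z \<omega>') \<partial>M)"
proof -
  have Y: "Y \<in> measurable M S" and Z: "Z \<in> measurable M N"
    using indep by (auto dest: indep_var_rv1 indep_var_rv2)
  interpret Zd: prob_space "distr M N Z" by (rule prob_space_distr[OF Z])
  define F where "F = vimage_algebra (space M) Y S"
  define \<psi> where "\<psi> y = (\<integral>\<^sup>+ z. K (y, z) \<partial>distr M N Z)" for y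
  have Y_space: "Y \<in> space M \<rightarrow> space S" using measurable_space[OF Y] by auto
  have K_section: "(\<lambda>z. K (Y \<omega>, z)) \<in> borel_measurable N" if "\<omega> \<in> space M" for \<omega>
    using measurable_Pair2[OF K, of "Y \<omega>"] Y_space that by auto
  have "K \<in> borel_measurable (S \<Otimes>\<^sub>M distr M N Z)" using K by (simp cong: measurable_cong_sets)
  then have \<psi>: "\<psi> \<in> borel_measurable S"
    unfolding \<psi>_def by (rule Zd.borel_measurable_nn_integral_fst)
  have "subalgebra M F"
    using measurable_sets[OF Y] by (auto simp: subalgebra_def F_def sets_vimage_algebra2[OF Y_space])
  then interpret F: finite_measure_subalgebra M F
    by (simp add: finite_measure_subalgebra_def finite_measure_subalgebra_axioms_def finite_measure_axioms)
  have "AE \<omega> in M. \<psi> (Y \<omega>) = nn_cond_exp M F (\<lambda>\<omega>. K (Y \<omega>, Z \<omega>)) \<omega>"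
  proof (rule F.nn_cond_exp_charact)
    show "(\<lambda>\<omega>. K (Y \<omega>, Z \<omega>)) \<in> borel_measurable M"
      using measurable_compose[OF measurable_Pair[OF Y Z] K] by simp
    show "(\<lambda>\<omega>. \<psi> (Y \<omega>)) \<in> borel_measurable F"
      unfolding F_def by (rule measurable_compose[OF measurable_vimage_algebra1[OF Y_space] \<psi>])
    fix A assume "A \<in> sets F"
    then obtain B where B: "B \<in> sets S" "A = Y -` B \<inter> space M"
      unfolding F_def sets_vimage_algebra2[OF Y_space] by auto
    have "(\<integral>\<^sup>+ \<omega>\<in>A. K (Y \<omega>, Z \<omega>) \<partial>M)
        = (\<integral>\<^sup>+ \<omega>. K (Y \<omega>, Z \<omega>) * indicator B (fst (Y \<omega>, Z \<omega>)) \<partial>M)"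
      by (rule nn_integral_cong) (auto simp: B(2) indicator_def)
    also have "\<dots>
        = (\<integral>\<^sup>+ \<omega>. (\<integral>\<^sup>+ z. K (Y \<omega>, z) * indicator B (fst (Y \<omega>, z)) \<partial>distr M N Z) \<partial>M)"
      by (rule nn_integral_indep_var[OF indep]) (use K B(1) in measurable)
    also have "\<dots> = (\<integral>\<^sup>+ \<omega>\<in>A. \<psi> (Y \<omega>) \<partial>M)"
      by (rule nn_integral_cong)
         (simp add: \<psi>_def B(2) K_section nn_integral_multc mult.commute indicator_def)
    finally show "(\<integral>\<^sup>+ \<omega>\<in>A. K (Y \<omega>, Z \<omega>) \<partial>M) = (\<integral>\<^sup>+ \<omega>\<in>A. \<psi> (Y \<omega>) \<partial>M)"
      .
  qed
  moreover have "\<psi> (Y \<omega>) = (\<integral>\<^sup>+ \<omega>'. K (Y \<omega>, Z \<omega>') \<partial>M)" if "\<omega> \<in> space M" for \<omega>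
    unfolding \<psi>_def using K_section[OF that] by (subst nn_integral_distr[OF Z]) auto
  ultimately show ?thesis unfolding F_def by (auto elim: AE_mp)
qed

primrec iter_path :: "(nat \<Rightarrow> 'a \<Rightarrow> 'w \<Rightarrow> 'a) \<Rightarrow> 'a \<Rightarrow> nat \<Rightarrow> (nat \<Rightarrow> 'w) \<Rightarrow> 'a" where
  "iter_path step x0 0 y = x0"
| "iter_path step x0 (Suc t) y = step t (iter_path step x0 t y) (y t)"

lemma iter_path_cong: "(\<And>i. i < t \<Longrightarrow> y i = y' i) \<Longrightarrow> iter_path step x0 t y = iter_path step x0 t y'"
  by (induction t) auto

lemma iter_path_in:
  assumes "x0 \<in> D" and "\<And>n x w. x \<in> D \<Longrightarrow> step n x w \<in> D"
  shows "iter_path step x0 t y \<in> D"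
  using assms by (induction t) auto

lemma measurable_iter_path:
  fixes step :: "nat \<Rightarrow> 'a::topological_space \<Rightarrow> 'w \<Rightarrow> 'a"
  assumes x0: "x0 \<in> D" and step_in: "\<And>n x w. x \<in> D \<Longrightarrow> step n x w \<in> D"
    and step_meas: "\<And>n. (\<lambda>(x, w). step n x w)
      \<in> borel_measurable (restrict_space (borel \<Otimes>\<^sub>M N) (D \<times> space N))"
    and "t \<le> m"
  shows "iter_path step x0 t \<in> borel_measurable (PiM {..<m} (\<lambda>_. N))"
  using \<open>t \<le> m\<close>
proof (induction t)
  case (Suc t)
  have "(\<lambda>y. (iter_path step x0 t y, y t))
      \<in> measurable (PiM {..<m} (\<lambda>_. N)) (restrict_space (borel \<Otimes>\<^sub>M N) (D \<times> space N))"
  proof (rule measurable_restrict_space2)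
    show "(\<lambda>y. (iter_path step x0 t y, y t)) \<in> space (PiM {..<m} (\<lambda>_. N)) \<rightarrow> D \<times> space N"
      using iter_path_in[OF x0 step_in] Suc.prems by (auto simp: space_PiM)
    show "(\<lambda>y. (iter_path step x0 t y, y t)) \<in> measurable (PiM {..<m} (\<lambda>_. N)) (borel \<Otimes>\<^sub>M N)"
      using Suc by (intro measurable_Pair measurable_component_singleton) auto
  qed
  from measurable_compose[OF this step_meas] show ?case by simp
next
  case 0
  have "iter_path step x0 0 = (\<lambda>_. x0)" by (simp add: fun_eq_iff)
  then show ?case by simp
qed

lemma measurable_prox_gradient_step:
  fixes r :: "'a::euclidean_space \<Rightarrow> ereal" and G :: "'a \<Rightarrow> 'w \<Rightarrow> 'a"
  assumes "0 < \<alpha>" and "proper_fun r" and "closed_fun r" and "convex_fun r"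
    and G: "(\<lambda>(x, w). G x w) \<in> borel_measurable (restrict_space (borel \<Otimes>\<^sub>M P) (U \<times> space P))"
    and "D \<subseteq> U"
  shows "(\<lambda>(x, w). prox \<alpha> r (x - \<alpha> *\<^sub>R G x w))
    \<in> borel_measurable (restrict_space (borel \<Otimes>\<^sub>M P) (D \<times> space P))"
proof -
  have "(\<lambda>(x, w). G x w) \<in> borel_measurable (restrict_space (borel \<Otimes>\<^sub>M P) (D \<times> space P))"
    by (rule measurable_restrict_mono[OF G]) (use \<open>D \<subseteq> U\<close> in auto)
  moreover have "fst \<in> borel_measurable (restrict_space (borel \<Otimes>\<^sub>M P) (D \<times> space P))"
    by (intro measurable_restrict_space1 measurable_fst)
  ultimately have "(\<lambda>p. fst p - \<alpha> *\<^sub>R (\<lambda>(x, w). G x w) p)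
      \<in> borel_measurable (restrict_space (borel \<Otimes>\<^sub>M P) (D \<times> space P))"
    by (intro borel_measurable_diff borel_measurable_scaleR) auto
  from measurable_compose[OF this borel_measurable_continuous_onI[OF continuous_on_prox[OF assms(1-4)]]]
  show ?thesis by (simp add: case_prod_beta')
qed

lemma (in prob_space) nn_cond_exp_iter_path_step:
  fixes \<xi> :: "nat \<Rightarrow> 'a \<Rightarrow> 'w" and step :: "nat \<Rightarrow> 'b::topological_space \<Rightarrow> 'w \<Rightarrow> 'b"
  assumes xi_meas: "\<And>i. \<xi> i \<in> measurable M N" and xi_dist: "\<And>i. distr M N (\<xi> i) = N"
    and indep: "indep_vars (\<lambda>_. N) \<xi> UNIV"
    and x0: "x0 \<in> D" and step_in: "\<And>n x w. x \<in> D \<Longrightarrow> step n x w \<in> D"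
    and step_meas: "\<And>n. (\<lambda>(x, w). step n x w)
      \<in> borel_measurable (restrict_space (borel \<Otimes>\<^sub>M N) (D \<times> space N))"
    and \<Phi>: "(\<lambda>(x, x'). \<Phi> x x') \<in> borel_measurable (borel \<Otimes>\<^sub>M borel)"
  defines "X n \<omega> \<equiv> iter_path step x0 n (\<lambda>i. \<xi> i \<omega>)"
  shows "AE \<omega> in M.
    nn_cond_exp M (vimage_algebra (space M) (\<lambda>\<omega>. \<lambda>i\<in>{..<t}. \<xi> i \<omega>) (PiM {..<t} (\<lambda>_. N)))
      (\<lambda>\<omega>. \<Phi> (X t \<omega>) (X (Suc t) \<omega>)) \<omega>
    = (\<integral>\<^sup>+ w. \<Phi> (X t \<omega>) (step t (X t \<omega>) w) \<partial>N)"
proof -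
  \<comment> \<open>\<open>Z\<close> keeps \<open>\<xi> t\<close> as a function on \<open>{t}\<close>: \<open>indep_var\<close> needs both variables to have one type.\<close>
  define Y Z where "Y = (\<lambda>\<omega>. \<lambda>i\<in>{..<t}. \<xi> i \<omega>)" and "Z = (\<lambda>\<omega>. \<lambda>i\<in>{t}. \<xi> i \<omega>)"
  define L where "L y = \<Phi> (iter_path step x0 t y) (iter_path step x0 (Suc t) y)" for y
  have "L \<in> borel_measurable (PiM {..<Suc t} (\<lambda>_. N))"
    unfolding L_def using measurable_iter_path[OF x0 step_in step_meas] \<Phi> by measurable
  then have L_merge_meas: "(\<lambda>p. L (merge {..<t} {t} p))
      \<in> borel_measurable (PiM {..<t} (\<lambda>_. N) \<Otimes>\<^sub>M PiM {t} (\<lambda>_. N))"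
    by (intro measurable_compose[OF measurable_merge]) (simp add: lessThan_Suc)
  have L_merge: "L (merge {..<t} {t} (Y \<omega>, Z \<omega>')) = \<Phi> (X t \<omega>) (step t (X t \<omega>) (\<xi> t \<omega>'))"
    for \<omega> \<omega>'
  proof -
    have "iter_path step x0 t (merge {..<t} {t} (Y \<omega>, Z \<omega>')) = X t \<omega>"
      unfolding X_def by (rule iter_path_cong) (simp add: Y_def)
    then show ?thesis by (simp add: L_def Z_def)
  qed
  have "AE \<omega> in M. nn_cond_exp M (vimage_algebra (space M) Y (PiM {..<t} (\<lambda>_. N)))
      (\<lambda>\<omega>. L (merge {..<t} {t} (Y \<omega>, Z \<omega>))) \<omega>
    = (\<integral>\<^sup>+ \<omega>'. L (merge {..<t} {t} (Y \<omega>, Z \<omega>')) \<partial>M)"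
    using nn_cond_exp_freezing[OF indep_var_restrict[OF indep] L_merge_meas] by (simp add: Y_def Z_def)
  moreover have "(\<integral>\<^sup>+ \<omega>'. L (merge {..<t} {t} (Y \<omega>, Z \<omega>')) \<partial>M)
      = (\<integral>\<^sup>+ w. \<Phi> (X t \<omega>) (step t (X t \<omega>) w) \<partial>N)" for \<omega>
  proof -
    have "(\<lambda>w. (X t \<omega>, w)) \<in> measurable N (restrict_space (borel \<Otimes>\<^sub>M N) (D \<times> space N))"
      using iter_path_in[OF x0 step_in] by (intro measurable_restrict_space2 measurable_Pair) (auto simp: X_def)
    from measurable_compose[OF this step_meas]
    have "(\<lambda>w. step t (X t \<omega>) w) \<in> borel_measurable N" by simp
    then have "(\<lambda>w. \<Phi> (X t \<omega>) (step t (X t \<omega>) w)) \<in> borel_measurable N" using \<Phi> by measurable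
    then show ?thesis
      unfolding L_merge by (subst xi_dist[symmetric, of t], subst nn_integral_distr[OF xi_meas]) auto
  qed
  moreover have "L (merge {..<t} {t} (Y \<omega>, Z \<omega>)) = \<Phi> (X t \<omega>) (X (Suc t) \<omega>)" for \<omega>
    unfolding L_merge by (simp add: X_def)
  ultimately show ?thesis unfolding Y_def by simp
qed

theorem lemma3p5:
  fixes \<rho> \<rho>b \<sigma> :: real
    and f :: "'a::euclidean_space \<Rightarrow> real" and gf :: "'a \<Rightarrow> 'a"
    and r :: "'a \<Rightarrow> ereal"
    and P :: "'w measure" and G :: "'a \<Rightarrow> 'w \<Rightarrow> 'a" and U :: "'a set"
    and M :: "'s measure" and \<xi> :: "nat \<Rightarrow> 's \<Rightarrow> 'w"
    and x0 :: 'a and \<alpha> :: "nat \<Rightarrow> real" and X :: "nat \<Rightarrow> 's \<Rightarrow> 'a"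
  assumes rho_pos: "\<rho> > 0"
    and f_grad: "\<And>x. (f has_derivative (\<lambda>h. gf x \<bullet> h)) (at x)"
    and gf_lip: "\<And>x y. norm (gf x - gf y) \<le> \<rho> * norm (x - y)"
    and r_proper: "proper_fun r" and r_closed: "closed_fun r" and r_convex: "convex_fun r"
    \<comment> \<open>(A1): xi_0, xi_1, ... i.i.d. with law P\<close>
    and P_prob: "prob_space P" and M_prob: "prob_space M"
    and xi_meas: "\<And>t. \<xi> t \<in> measurable M P"
    and xi_dist: "\<And>t. distr M P (\<xi> t) = P"
    and xi_indep: "prob_space.indep_vars M (\<lambda>_. P) \<xi> UNIV"
    \<comment> \<open>(A2)\<close>
    and U_open: "open U" and U_dom: "edom r \<subseteq> U"
    and G_meas: "(\<lambda>(x, w). G x w) \<in> borel_measurable (restrict_space (borel \<Otimes>\<^sub>M P) (U \<times> space P))"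
    and G_integrable: "\<And>x. x \<in> U \<Longrightarrow> integrable P (G x)"
    and G_unbiased: "\<And>x. x \<in> U \<Longrightarrow> (\<integral>w. G x w \<partial>P) = gf x"
    \<comment> \<open>(A3-bar)\<close>
    and sigma_nonneg: "\<sigma> \<ge> 0"
    and G_var: "\<And>x. x \<in> edom r \<Longrightarrow> (\<integral>\<^sup>+ w. ennreal (norm (G x w - gf x) ^ 2) \<partial>P) \<le> ennreal (\<sigma> ^ 2)"
    \<comment> \<open>iteration\<close>
    and x0_dom: "x0 \<in> edom r"
    and X_0: "\<And>\<omega>. X 0 \<omega> = x0"
    and X_Suc: "\<And>t \<omega>. X (Suc t) \<omega> = prox (\<alpha> t) r (X t \<omega> - \<alpha> t *\<^sub>R G (X t \<omega>) (\<xi> t \<omega>))"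
    and rhob_gt: "\<rho>b > \<rho>"
    and alpha_pos: "\<And>t. 0 < \<alpha> t" and alpha_le: "\<And>t. \<alpha> t \<le> 1 / \<rho>b"
  shows "\<forall>t. AE \<omega> in M.
     (let xh = argmin (\<lambda>y. ereal (f y) + r y + ereal (\<rho>b / 2 * norm (y - X t \<omega>) ^ 2))
      in nn_cond_exp M
           (vimage_algebra (space M) (\<lambda>\<omega>'. \<lambda>i\<in>{..<t}. \<xi> i \<omega>') (PiM {..<t} (\<lambda>_. P)))
           (\<lambda>\<omega>'. ennreal (norm (X (Suc t) \<omega>' -
               argmin (\<lambda>y. ereal (f y) + r y + ereal (\<rho>b / 2 * norm (y - X t \<omega>') ^ 2))) ^ 2)) \<omega>
         \<le> ennreal (norm (X t \<omega> - xh) ^ 2 + (\<alpha> t)^2 * \<sigma>^2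
                    - \<alpha> t * (\<rho>b - \<rho>) * norm (X t \<omega> - xh) ^ 2))"
proof -
  interpret M: prob_space M by (rule M_prob)
  interpret weakly_convex_composite f gf \<rho> \<rho>b r
    using f_grad gf_lip rho_pos rhob_gt r_proper r_closed r_convex by unfold_locales auto
  define step where "step n x w = prox (\<alpha> n) r (x - \<alpha> n *\<^sub>R G x w)" for n x w
  have step_in: "step n x w \<in> edom r" for n x w
    unfolding step_def using alpha_pos r_proper r_closed r_convex by (rule prox_in_edom)
  have step_meas: "(\<lambda>(x, w). step n x w)
      \<in> borel_measurable (restrict_space (borel \<Otimes>\<^sub>M P) (edom r \<times> space P))" for n
    unfolding step_def using alpha_pos r_proper r_closed r_convex G_meas U_dom
    by (rule measurable_prox_gradient_step)
  have X_path: "X n \<omega> = iter_path step x0 n (\<lambda>i. \<xi> i \<omega>)" for n \<omega>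
    by (induction n) (simp_all add: X_0 X_Suc step_def)
  have "(\<lambda>(x, x'). ennreal (norm (x' - prox_point x)^2)) \<in> borel_measurable (borel \<Otimes>\<^sub>M borel)"
    using borel_measurable_continuous_onI[OF continuous_on_prox_point] by measurable
  note cond_exp = M.nn_cond_exp_iter_path_step[where step=step and D="edom r",
      OF xi_meas xi_dist xi_indep x0_dom step_in step_meas this, folded X_path]
  have bound: "(\<integral>\<^sup>+ w. ennreal (norm (step t (X t \<omega>) w - prox_point (X t \<omega>))^2) \<partial>P)
      \<le> ennreal (norm (X t \<omega> - prox_point (X t \<omega>)) ^ 2 + (\<alpha> t)^2 * \<sigma>^2
                 - \<alpha> t * (\<rho>b - \<rho>) * norm (X t \<omega> - prox_point (X t \<omega>)) ^ 2)" for t \<omega>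
  proof -
    have "X t \<omega> \<in> edom r" unfolding X_path by (rule iter_path_in[OF x0_dom step_in])
    then show ?thesis unfolding step_def using U_dom
      by (intro expected_prox_gradient_step P_prob G_integrable G_unbiased G_var alpha_pos alpha_le) auto
  qed
  show ?thesis
    unfolding prox_point_def[symmetric] Let_def
  proof
    fix t
    from cond_exp[of t] show "AE \<omega> in M. nn_cond_exp M
        (vimage_algebra (space M) (\<lambda>\<omega>'. \<lambda>i\<in>{..<t}. \<xi> i \<omega>') (PiM {..<t} (\<lambda>_. P)))
        (\<lambda>\<omega>'. ennreal (norm (X (Suc t) \<omega>' - prox_point (X t \<omega>')) ^ 2)) \<omega>
      \<le> ennreal (norm (X t \<omega> - prox_point (X t \<omega>)) ^ 2 + (\<alpha> t)^2 * \<sigma>^2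
                 - \<alpha> t * (\<rho>b - \<rho>) * norm (X t \<omega> - prox_point (X t \<omega>)) ^ 2)"
      by eventually_elim (use bound in simp)
  qed
qed

end
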